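(* If $T\in\mathscr T$ satisfies $T(\mathbb C[\mathfrak h^*_{\mathbb C}])\subseteq\mathbb C[\mathfrak h^*_{\mathbb C}]$, then $T$ lies in the image of the natural map $\mathscr S\to\mathscr T$.
   Context: Let $(X^*,\Phi,X_*,\Phi^\vee)$ be a root datum with Weyl group $W$ and $\mathfrak h^*=X^*\otimes\mathbb R$. Let $\widetilde W=X^*\rtimes W$ (extended affine Weyl group) act on $\mathfrak h^*_{\mathbb C}$ by affine transformations (translations by $X^*$ and the linear $W$-action). An element $s\in\widetilde W$ is a reflection if its fixed-point locus $H_s$ in $\mathfrak h^*_{\mathbb C}$ is an affine hyperplane; let $\widetilde W^\heartsuit$ be the set of reflections and for each $s$ fix an affine function $\ell_s$ with zero locus $H_s$. For $w\in\widetilde W$ let $t_w$ be the operator $(t_wP)(\alpha)=P(w^{-1}\alpha)$ on $\mathbb C[\mathfrak h^*_{\mathbb C}]$ (and on its fraction field $\mathbb C(\mathfrak h^*_{\mathbb C})$). Let $\mathscr R$ be the algebra of endomorphisms of $\mathbb C[\mathfrak h^*_{\mathbb C}]$ generated by all $t_w$ and multiplications by polynomials, viewed as a left $\mathbb C[\mathfrak h^*_{\mathbb C}]$-module. Put $\mathscr S=\mathbb C[\mathfrak h^*_{\mathbb C}][\ell_s^{-1}: s\in\widetilde W^\heartsuit]\otimes_{\mathbb C[\mathfrak h^*_{\mathbb C}]}\mathscr R$ and $\mathscr T=\mathbb C(\mathfrak h^*_{\mathbb C})\otimes_{\mathbb C[\mathfrak h^*_{\mathbb C}]}\mathscr R$,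 regarded as operators on $\mathbb C(\mathfrak h^*_{\mathbb C})$. *)

theory Defs
  imports "HOL-Analysis.Analysis"
begin

(* Coordinates: X^* = int^'n, X_* = int^'n, pairing = dot product;
   h^*_C = complex^'n. *)

definition ipair :: "int^'n \<Rightarrow> int^'n \<Rightarrow> int" where
  "ipair x y = (\<Sum>i\<in>UNIV. x$i * y$i)"

definition srefl :: "int^'n \<Rightarrow> int^'n \<Rightarrow> int^'n \<Rightarrow> int^'n" where
  "srefl a av x = x - ipair x av *s a"

(* root datum (X^*, Phi, X_*, Phi^vee) with Phi^vee = cor ` Phi, alpha |-> alpha^vee = cor alpha *)
definition root_datum :: "(int^'n) set \<Rightarrow> (int^'n \<Rightarrow> int^'n) \<Rightarrow> bool" where
  "root_datum Phi cor \<longleftrightarrow> finite Phi \<and> inj_on cor Phi \<and>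
     (\<forall>a\<in>Phi. ipair a (cor a) = 2 \<and>
        (\<forall>b\<in>Phi. srefl a (cor a) b \<in> Phi) \<and>
        (\<forall>b\<in>Phi. srefl (cor a) a (cor b) \<in> cor ` Phi))"

definition cvec :: "int^'n \<Rightarrow> complex^'n" where
  "cvec v = (\<chi> i. of_int (v$i))"

definition crefl :: "int^'n \<Rightarrow> int^'n \<Rightarrow> complex^'n \<Rightarrow> complex^'n" where
  "crefl a av v = v - (\<Sum>i\<in>UNIV. v$i * of_int (av$i)) *s cvec a"

(* Weyl group W: generated by the reflections s_alpha (involutions, so the
   generated monoid is the generated group) *)
inductive_set weyl_group :: "(int^'n) set \<Rightarrow> (int^'n \<Rightarrow> int^'n) \<Rightarrow> (complex^'n \<Rightarrow> complex^'n) set"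
  for Phi cor where
  wid: "id \<in> weyl_group Phi cor"
| wrefl: "a \<in> Phi \<Longrightarrow> w \<in> weyl_group Phi cor \<Longrightarrow> crefl a (cor a) \<circ> w \<in> weyl_group Phi cor"

definition ext_weyl_group :: "(int^'n) set \<Rightarrow> (int^'n \<Rightarrow> int^'n) \<Rightarrow> (complex^'n \<Rightarrow> complex^'n) set" where
  "ext_weyl_group Phi cor = {(\<lambda>v. w v + cvec lam) | w lam. w \<in> weyl_group Phi cor}"

definition is_affine_hyperplane :: "(complex^'n) set \<Rightarrow> bool" where
  "is_affine_hyperplane H \<longleftrightarrow> (\<exists>a c. a \<noteq> 0 \<and> H = {x. (\<Sum>i\<in>UNIV. a$i * x$i) = c})"

definition affine_reflections :: "(int^'n) set \<Rightarrow> (int^'n \<Rightarrow> int^'n) \<Rightarrow> (complex^'n \<Rightarrow> complex^'n) set" where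
  "affine_reflections Phi cor = {s \<in> ext_weyl_group Phi cor. is_affine_hyperplane {x. s x = x}}"

definition affine_fun :: "(complex^'n \<Rightarrow> complex) \<Rightarrow> bool" where
  "affine_fun f \<longleftrightarrow> (\<exists>a c. f = (\<lambda>x. (\<Sum>i\<in>UNIV. a$i * x$i) + c))"

(* C[h^*_C] realised as the ring of polynomial functions on complex^'n *)
inductive_set polyfun :: "(complex^'n \<Rightarrow> complex) set" where
  pconst: "(\<lambda>x. c) \<in> polyfun"
| pcoord: "(\<lambda>x. x$i) \<in> polyfun"
| padd: "f \<in> polyfun \<Longrightarrow> g \<in> polyfun \<Longrightarrow> (\<lambda>x. f x + g x) \<in> polyfun"
| pmult: "f \<in> polyfun \<Longrightarrow> g \<in> polyfun \<Longrightarrow> (\<lambda>x. f x * g x) \<in> polyfun"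

end

theory Submission
  imports Defs "HOL-Computational_Algebra.Polynomial"
begin

text \<open>Fix \<open>g0 \<in> F\<close>. For a linear form \<open>L\<close>, composing the operator with the multiplications by
  \<open>L - L \<circ> g\<inverse>\<close> (\<open>g \<noteq> g0\<close>) kills every term except the \<open>g0\<close>-term, so the product of the affine
  functions \<open>L \<circ> g0\<inverse> - L \<circ> g\<inverse>\<close> clears the denominator of \<open>p g0 / q g0\<close>. These factors are
  removed one at a time. A factor vanishing on a reflection hyperplane is traded for the
  corresponding \<open>l s\<close>. On any other hyperplane \<open>H\<close>, \<open>g0\<inverse>\<close> and \<open>g\<inverse>\<close> differ somewhere (otherwise
  \<open>g0 \<circ> g\<inverse>\<close> would be a reflection in \<open>H\<close>), so a generic \<open>L'\<close> gives a product not vanishing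
  identically on \<open>H\<close> that also clears the denominator; since polynomial functions on \<open>H\<close> have no
  zero divisors, the factor vanishing on \<open>H\<close> can then be cancelled.\<close>

section \<open>Polynomial functions\<close>

lemma polyfun_uminus: "f \<in> polyfun \<Longrightarrow> (\<lambda>x. - f x) \<in> polyfun"
  using polyfun.pmult[OF polyfun.pconst[of "-1"]] by simp

lemma polyfun_diff: "f \<in> polyfun \<Longrightarrow> g \<in> polyfun \<Longrightarrow> (\<lambda>x. f x - g x) \<in> polyfun"
  using polyfun.padd[OF _ polyfun_uminus] by simp

lemma polyfun_sum: "(\<And>j. j \<in> S \<Longrightarrow> f j \<in> polyfun) \<Longrightarrow> (\<lambda>x. \<Sum>j\<in>S. f j x) \<in> polyfun"
  by (induction S rule: infinite_finite_induct) (auto intro: polyfun.intros)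

lemma polyfun_prod: "(\<And>j. j \<in> S \<Longrightarrow> f j \<in> polyfun) \<Longrightarrow> (\<lambda>x. \<Prod>j\<in>S. f j x) \<in> polyfun"
  by (induction S rule: infinite_finite_induct) (auto intro: polyfun.intros)

lemma polyfun_prod_list: "(\<And>s. s \<in> set ss \<Longrightarrow> f s \<in> polyfun) \<Longrightarrow> (\<lambda>x. \<Prod>s\<leftarrow>ss. f s x) \<in> polyfun"
  by (induction ss) (auto intro: polyfun.intros)

lemma polyfun_compose:
  "f \<in> polyfun \<Longrightarrow> (\<And>i. (\<lambda>x. \<phi> x $ i) \<in> polyfun) \<Longrightarrow> (\<lambda>x. f (\<phi> x)) \<in> polyfun"
  by (induction f rule: polyfun.induct) (auto intro: polyfun.intros)

lemma polyfun_on_line: "f \<in> polyfun \<Longrightarrow> \<exists>r. \<forall>t. f (x + t *s v) = poly r t"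
proof (induction f rule: polyfun.induct)
  case (pconst c)
  show ?case by (intro exI[of _ "[:c:]"]) simp
next
  case (pcoord i)
  show ?case by (intro exI[of _ "[:x$i, v$i:]"]) (simp add: mult.commute)
next
  case (padd f g)
  then show ?case by (metis poly_add)
next
  case (pmult f g)
  then show ?case by (metis poly_mult)
qed

text \<open>Restricting to the line through a point where \<open>f\<close> does not vanish reduces this to
  univariate polynomials.\<close>
lemma polyfun_no_zero_divisors:
  assumes f: "f \<in> polyfun" and g: "g \<in> polyfun"
    and fg: "\<And>x. f x * g x = 0" and f_nz: "f \<noteq> (\<lambda>x. 0)"
  shows "g = (\<lambda>x. 0)"
proof
  fix x
  obtain x0 where x0: "f x0 \<noteq> 0" using f_nz by auto
  obtain rf where rf: "\<And>t. f (x0 + t *s (x - x0)) = poly rf t" using polyfun_on_line[OF f] by blast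
  obtain rg where rg: "\<And>t. g (x0 + t *s (x - x0)) = poly rg t" using polyfun_on_line[OF g] by blast
  have "poly (rf * rg) t = 0" for t using rf rg fg by (metis poly_mult)
  then have "rf * rg = 0" using poly_all_0_iff_0 by blast
  moreover have "rf \<noteq> 0" using rf[of 0] x0 by auto
  ultimately have "rg = 0" by simp
  then show "g x = 0" using rg[of 1] by simp
qed

lemma polyfun_eq_if_eq_off_zeros:
  assumes "f \<in> polyfun" "g \<in> polyfun" "h \<in> polyfun" "h \<noteq> (\<lambda>x. 0)"
    and eq: "\<And>x. h x \<noteq> 0 \<Longrightarrow> f x = g x"
  shows "f = g"
proof -
  have "h x * (f x - g x) = 0" for x using eq[of x] by (cases "h x = 0") simp_all
  then have "(\<lambda>x. f x - g x) = (\<lambda>x. 0)"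
    using assms by (intro polyfun_no_zero_divisors polyfun_diff)
  then show ?thesis by (simp add: fun_eq_iff)
qed

lemma polyfun_mult_right_cancel:
  assumes "f \<in> polyfun" "g \<in> polyfun" "h \<in> polyfun" "h \<noteq> (\<lambda>x. 0)"
    and "\<And>x. f x * h x = g x * h x"
  shows "f = g"
  using assms by (intro polyfun_eq_if_eq_off_zeros[of f g h]) auto

lemma polyfun_prod_nonzero:
  "finite S \<Longrightarrow> (\<And>j. j \<in> S \<Longrightarrow> f j \<in> polyfun \<and> f j \<noteq> (\<lambda>x. 0))
    \<Longrightarrow> (\<lambda>x. \<Prod>j\<in>S. f j x) \<noteq> (\<lambda>x. 0)"
proof (induction S rule: finite_induct)
  case empty
  show ?case by (simp add: fun_eq_iff)
next
  case (insert a S)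
  have "(\<lambda>x. \<Prod>j\<in>S. f j x) \<in> polyfun" "(\<lambda>x. \<Prod>j\<in>S. f j x) \<noteq> (\<lambda>x. 0)"
    using insert by (auto intro: polyfun_prod)
  moreover have "f a \<in> polyfun" "f a \<noteq> (\<lambda>x. 0)" using insert.prems by auto
  ultimately show ?case
    using insert.hyps polyfun_no_zero_divisors[of "f a" "\<lambda>x. \<Prod>j\<in>S. f j x"]
    by (auto simp: fun_eq_iff)
qed

section \<open>Affine functions and hyperplanes\<close>

definition lf :: "complex^'n \<Rightarrow> complex^'n \<Rightarrow> complex" where
  "lf L y = (\<Sum>i\<in>UNIV. L$i * y$i)"

definition aff :: "complex^'n \<Rightarrow> complex \<Rightarrow> complex^'n \<Rightarrow> complex" where
  "aff a c x = lf a x + c"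

lemma lf_add: "lf L (x + y) = lf L x + lf L y"
  by (simp add: lf_def algebra_simps sum.distrib)

lemma lf_diff: "lf L (x - y) = lf L x - lf L y"
  by (simp add: lf_def algebra_simps sum_subtractf)

lemma lf_scale: "lf L (t *s y) = t * lf L y"
  by (simp add: lf_def algebra_simps sum_distrib_left)

lemma lf_uminus: "lf L (- y) = - lf L y"
  by (simp add: lf_def sum_negf)

lemma lf_axis: "lf L (axis j 1) = L$j"
  unfolding lf_def axis_def by (simp add: if_distrib[where f="\<lambda>z. _ * z"] cong: if_cong)

lemma lf_axis_left: "lf (axis j 1) y = y$j"
  unfolding lf_def axis_def by (simp add: if_distrib[where f="\<lambda>z. z * _"] cong: if_cong)

lemma lf_add_left: "lf (L + M) y = lf L y + lf M y"
  by (simp add: lf_def algebra_simps sum.distrib)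

lemma lf_scale_left: "lf (t *s L) y = t * lf L y"
  by (simp add: lf_def algebra_simps sum_distrib_left)

lemma polyfun_lf: "lf L \<in> polyfun"
  unfolding lf_def by (intro polyfun_sum) (auto intro: polyfun.intros)

lemma polyfun_aff: "aff a c \<in> polyfun"
  unfolding aff_def by (rule polyfun.padd[OF polyfun_lf polyfun.pconst])

lemma aff_zero_left [simp]: "aff 0 c x = c"
  by (simp add: aff_def lf_def)

lemma aff_diff: "aff a c x - aff a' c' x = aff (a - a') (c - c') x"
  by (simp add: aff_def lf_def sum_subtractf algebra_simps)

lemma affine_fun_iff_aff: "affine_fun f \<longleftrightarrow> (\<exists>a c. f = aff a c)"
  unfolding affine_fun_def aff_def lf_def ..

lemma polyfun_affine_fun: "affine_fun f \<Longrightarrow> f \<in> polyfun"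
  using affine_fun_iff_aff polyfun_aff by metis

lemma is_affine_hyperplane_aff: "a \<noteq> 0 \<Longrightarrow> is_affine_hyperplane {x. aff a c x = 0}"
  unfolding is_affine_hyperplane_def aff_def lf_def eq_neg_iff_add_eq_0 [symmetric] by blast

lemma nonzero_component: "(a :: 'a::zero^'n) \<noteq> 0 \<Longrightarrow> \<exists>k. a$k \<noteq> 0"
  by (metis vec_eq_iff zero_index)

lemma aff_nonzero_somewhere: "a \<noteq> 0 \<Longrightarrow> \<exists>x. aff a c x \<noteq> 0"
proof -
  assume "a \<noteq> 0"
  then obtain k where "a$k \<noteq> 0" using nonzero_component by blast
  then have "aff a c (((1 - c) / a$k) *s axis k 1) = 1" by (simp add: aff_def lf_scale lf_axis)
  then show ?thesis by (metis one_neq_zero)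
qed

lemma aff_proportional:
  assumes a: "a \<noteq> 0" and zeros: "\<And>x. aff a c x = 0 \<Longrightarrow> aff e d x = 0"
  shows "\<exists>\<mu>. \<forall>x. aff e d x = \<mu> * aff a c x"
proof -
  obtain k where ak: "a$k \<noteq> 0" using a nonzero_component by blast
  define \<mu> where "\<mu> = e$k / a$k"
  define x0 :: "complex^_" where "x0 = (- c / a$k) *s axis k 1"
  have ax0: "aff a c x0 = 0" using ak by (simp add: x0_def aff_def lf_uminus lf_scale lf_axis)
  have "e$j = \<mu> * a$j" for j
  proof -
    define v :: "complex^_" where "v = axis j 1 - (a$j / a$k) *s axis k 1"
    have "aff a c (x0 + v) = 0" using ak ax0 by (simp add: v_def aff_def lf_add lf_diff lf_scale lf_axis)
    then have "aff e d (x0 + v) - aff e d x0 = 0" using zeros ax0 by simp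
    then have "lf e v = 0" by (simp add: aff_def lf_add)
    then show ?thesis using ak by (simp add: v_def lf_diff lf_scale lf_axis \<mu>_def field_simps)
  qed
  then have e: "e = \<mu> *s a" by (simp add: vec_eq_iff)
  have "d = \<mu> * c"
    using zeros[OF ax0] ax0 by (simp add: e aff_def lf_scale_left eq_neg_iff_add_eq_0 [symmetric])
  then show ?thesis by (intro exI[of _ \<mu>]) (simp add: e aff_def lf_scale_left algebra_simps)
qed

lemma aff_same_zeros_proportional:
  assumes "a \<noteq> 0" and "{x. aff e d x = 0} = {x. aff a c x = 0}"
  shows "\<exists>\<mu>. \<mu> \<noteq> 0 \<and> (\<forall>x. aff e d x = \<mu> * aff a c x)"
proof -
  obtain \<mu> where \<mu>: "\<forall>x. aff e d x = \<mu> * aff a c x" using aff_proportional assms by blast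
  obtain y where "aff a c y \<noteq> 0" using aff_nonzero_somewhere[OF \<open>a \<noteq> 0\<close>] by blast
  moreover have "aff e d y = 0 \<longleftrightarrow> aff a c y = 0" using assms(2) by blast
  ultimately have "\<mu> \<noteq> 0" using \<mu> by auto
  with \<mu> show ?thesis by blast
qed

text \<open>Perturb along a coordinate axis by a scalar outside the finitely many bad values.\<close>
lemma exists_lf_nonzero_on_finite:
  fixes Z :: "(complex^'n) set"
  shows "finite Z \<Longrightarrow> 0 \<notin> Z \<Longrightarrow> \<exists>L. \<forall>z\<in>Z. lf L z \<noteq> 0"
proof (induction Z rule: finite_induct)
  case empty
  show ?case by simp
next
  case (insert z Z)
  then obtain L where L: "\<forall>z\<in>Z. lf L z \<noteq> 0" by auto
  obtain k where zk: "z$k \<noteq> 0" using insert by (metis vec_eq_iff zero_index insertI1)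
  define w :: "complex^'n" where "w = axis k 1"
  define B where "B = (\<lambda>z'. - lf L z' / lf w z') ` insert z Z"
  have "finite B" using insert by (simp add: B_def)
  then obtain t where t: "t \<notin> B" using ex_new_if_finite[OF infinite_UNIV_char_0] by blast
  show ?case
  proof (intro exI[of _ "L + t *s w"] ballI notI)
    fix y assume y: "y \<in> insert z Z" and h: "lf (L + t *s w) y = 0"
    hence h': "lf L y + t * lf w y = 0" by (simp add: lf_add_left lf_scale_left)
    show False
    proof (cases "lf w y = 0")
      case True
      then show False using h' L y zk by (auto simp: w_def lf_axis_left)
    next
      case False
      hence "t = - lf L y / lf w y" using h' by (simp add: field_simps add_eq_0_iff)
      thus False using t y by (auto simp: B_def)
    qed
  qed
qed

definition hyperplane_proj :: "complex^'n \<Rightarrow> complex \<Rightarrow> 'n \<Rightarrow> complex^'n \<Rightarrow> complex^'n" where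
  "hyperplane_proj a c k x = x - (aff a c x / a$k) *s axis k 1"

lemma aff_hyperplane_proj: "a$k \<noteq> 0 \<Longrightarrow> aff a c (hyperplane_proj a c k x) = 0"
  by (simp add: hyperplane_proj_def aff_def lf_diff lf_scale lf_axis)

lemma hyperplane_proj_id: "aff a c x = 0 \<Longrightarrow> hyperplane_proj a c k x = x"
  by (simp add: hyperplane_proj_def)

lemma polyfun_hyperplane_proj: "(\<lambda>x. hyperplane_proj a c k x $ i) \<in> polyfun"
proof -
  have "(\<lambda>x. x$i - aff a c x * inverse (a$k) * (axis k 1 :: complex^_)$i) \<in> polyfun"
    by (intro polyfun_diff polyfun.pcoord polyfun.pmult polyfun_aff polyfun.pconst)
  then show ?thesis by (simp add: hyperplane_proj_def divide_inverse)
qed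

lemma polyfun_aff_division:
  assumes "f \<in> polyfun"
  shows "\<exists>r\<in>polyfun. \<forall>x. f x = aff a c x * r x + f (hyperplane_proj a c k x)"
  using assms
proof (induction f rule: polyfun.induct)
  case (pconst c)
  show ?case by (intro bexI[OF _ polyfun.pconst[of 0]]) simp
next
  case (pcoord i)
  have "x$i = aff a c x * ((axis k 1 :: complex^_)$i / a$k) + hyperplane_proj a c k x $ i" for x
    by (simp add: hyperplane_proj_def)
  then show ?case
    by (intro bexI[of _ "\<lambda>x. (axis k 1 :: complex^_)$i / a$k"] polyfun.pconst) blast
next
  case (padd f g)
  let ?\<pi> = "hyperplane_proj a c k"
  from padd obtain rf rg where r: "rf \<in> polyfun" "rg \<in> polyfun"
    and ef: "\<And>x. f x = aff a c x * rf x + f (?\<pi> x)"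
    and eg: "\<And>x. g x = aff a c x * rg x + g (?\<pi> x)" by blast
  have "f x + g x = aff a c x * (rf x + rg x) + (f (?\<pi> x) + g (?\<pi> x))" for x
    using arg_cong2[where f="(+)", OF ef eg, of x x] by (simp add: algebra_simps)
  moreover have "(\<lambda>x. rf x + rg x) \<in> polyfun" using r by (rule polyfun.padd)
  ultimately show ?case by (intro bexI[of _ "\<lambda>x. rf x + rg x"]) blast+
next
  case (pmult f g)
  let ?\<pi> = "hyperplane_proj a c k"
  from pmult obtain rf rg where r: "rf \<in> polyfun" "rg \<in> polyfun"
    and ef: "\<And>x. f x = aff a c x * rf x + f (?\<pi> x)"
    and eg: "\<And>x. g x = aff a c x * rg x + g (?\<pi> x)" by blast
  have "(\<lambda>x. f (?\<pi> x)) \<in> polyfun" using pmult.hyps(1) polyfun_hyperplane_proj by (rule polyfun_compose)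
  then have "(\<lambda>x. rf x * g x + f (?\<pi> x) * rg x) \<in> polyfun" using r pmult.hyps by (intro polyfun.intros)
  moreover have "f x * g x = aff a c x * (rf x * g x + f (?\<pi> x) * rg x) + f (?\<pi> x) * g (?\<pi> x)" for x
  proof -
    have "f x * g x = aff a c x * rf x * g x + f (?\<pi> x) * g x"
      using arg_cong[where f="\<lambda>u. u * g x", OF ef[of x]] by (simp add: distrib_right)
    also have "f (?\<pi> x) * g x = f (?\<pi> x) * (aff a c x * rg x + g (?\<pi> x))"
      using arg_cong[where f="\<lambda>u. f (?\<pi> x) * u", OF eg[of x]] .
    finally show ?thesis by (simp add: algebra_simps)
  qed
  ultimately show ?case by (intro bexI[of _ "\<lambda>x. rf x * g x + f (?\<pi> x) * rg x"]) blast+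
qed

lemma polyfun_vanishing_on_hyperplane_dvd:
  assumes a: "a \<noteq> 0" and f: "f \<in> polyfun" and vanish: "\<And>x. aff a c x = 0 \<Longrightarrow> f x = 0"
  shows "\<exists>r\<in>polyfun. \<forall>x. f x = aff a c x * r x"
proof -
  obtain k where "a$k \<noteq> 0" using a nonzero_component by blast
  then have "f (hyperplane_proj a c k x) = 0" for x using vanish aff_hyperplane_proj by blast
  then show ?thesis using polyfun_aff_division[OF f, of a c k] by simp
qed

lemma polyfun_no_zero_divisors_on_hyperplane:
  assumes a: "a \<noteq> 0" and f: "f \<in> polyfun" and g: "g \<in> polyfun"
    and fg: "\<And>x. aff a c x = 0 \<Longrightarrow> f x * g x = 0"
    and f_nz: "aff a c y = 0" "f y \<noteq> 0"
    and "aff a c x = 0"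
  shows "g x = 0"
proof -
  obtain k where ak: "a$k \<noteq> 0" using a nonzero_component by blast
  let ?\<pi> = "hyperplane_proj a c k"
  have "(\<lambda>x. g (?\<pi> x)) = (\<lambda>x. 0)"
  proof (rule polyfun_no_zero_divisors)
    show "(\<lambda>x. f (?\<pi> x)) \<in> polyfun" by (rule polyfun_compose[OF f polyfun_hyperplane_proj])
    show "(\<lambda>x. g (?\<pi> x)) \<in> polyfun" by (rule polyfun_compose[OF g polyfun_hyperplane_proj])
    show "f (?\<pi> x) * g (?\<pi> x) = 0" for x using fg aff_hyperplane_proj[OF ak] by blast
    show "(\<lambda>x. f (?\<pi> x)) \<noteq> (\<lambda>x. 0)" using f_nz hyperplane_proj_id by (metis (mono_tags))
  qed
  then show ?thesis using \<open>aff a c x = 0\<close> hyperplane_proj_id by metis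
qed

lemma polyfun_prod_nonvanishing_on_hyperplane:
  assumes a: "a \<noteq> 0"
  shows "finite S \<Longrightarrow> (\<And>j. j \<in> S \<Longrightarrow> f j \<in> polyfun \<and> (\<exists>x. aff a c x = 0 \<and> f j x \<noteq> 0))
    \<Longrightarrow> \<exists>x. aff a c x = 0 \<and> (\<Prod>j\<in>S. f j x) \<noteq> 0"
proof (induction S rule: finite_induct)
  case empty
  obtain k where "a$k \<noteq> 0" using a nonzero_component by blast
  then show ?case using aff_hyperplane_proj by (intro exI[of _ "hyperplane_proj a c k 0"]) simp
next
  case (insert j S)
  obtain y where y: "aff a c y = 0" "(\<Prod>j\<in>S. f j y) \<noteq> 0" using insert by blast
  obtain z where z: "aff a c z = 0" "f j z \<noteq> 0" using insert.prems by blast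
  have polys: "f j \<in> polyfun" "(\<lambda>x. \<Prod>j\<in>S. f j x) \<in> polyfun"
    using insert.prems by (auto intro: polyfun_prod)
  show ?case
  proof (rule ccontr)
    assume "\<nexists>x. aff a c x = 0 \<and> (\<Prod>j\<in>insert j S. f j x) \<noteq> 0"
    then have "aff a c x = 0 \<Longrightarrow> f j x * (\<Prod>j\<in>S. f j x) = 0" for x
      using insert.hyps by auto
    then have "(\<Prod>j\<in>S. f j y) = 0"
      using polyfun_no_zero_divisors_on_hyperplane[OF a polys] z y(1) by blast
    with y(2) show False ..
  qed
qed

section \<open>Clearing denominators\<close>

definition clears_denominator ::
    "(complex^'n \<Rightarrow> complex) \<Rightarrow> (complex^'n \<Rightarrow> complex) \<Rightarrow> (complex^'n \<Rightarrow> complex) \<Rightarrow> bool" where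
  "clears_denominator p q e \<longleftrightarrow> (\<exists>r\<in>polyfun. \<forall>x. p x * e x = r x * q x)"

lemma clears_denominator_mult:
  assumes "clears_denominator p q e" and "f \<in> polyfun"
  shows "clears_denominator p q (\<lambda>x. e x * f x)"
proof -
  obtain r where "r \<in> polyfun" and r: "\<And>x. p x * e x = r x * q x"
    using assms(1) unfolding clears_denominator_def by blast
  moreover have "p x * (e x * f x) = (r x * f x) * q x" for x
    using r[of x] by (metis mult.assoc mult.commute)
  ultimately show ?thesis
    unfolding clears_denominator_def using assms(2)
    by (intro bexI[of _ "\<lambda>x. r x * f x"] polyfun.pmult) blast+
qed

lemma clears_denominator_scale_iff:
  assumes "\<mu> \<noteq> 0"
  shows "clears_denominator p q (\<lambda>x. \<mu> * e x) \<longleftrightarrow> clears_denominator p q e"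
proof
  assume "clears_denominator p q (\<lambda>x. \<mu> * e x)"
  then have "clears_denominator p q (\<lambda>x. \<mu> * e x * inverse \<mu>)"
    by (rule clears_denominator_mult[OF _ polyfun.pconst])
  moreover have "(\<lambda>x. \<mu> * e x * inverse \<mu>) = e" using assms by (simp add: fun_eq_iff)
  ultimately show "clears_denominator p q e" by simp
next
  assume "clears_denominator p q e"
  then have "clears_denominator p q (\<lambda>x. e x * \<mu>)"
    by (rule clears_denominator_mult[OF _ polyfun.pconst])
  then show "clears_denominator p q (\<lambda>x. \<mu> * e x)" by (simp add: mult.commute)
qed

text \<open>Comparing with \<open>D \<cdot> p/q\<close> shows that the numerator \<open>r\<close> of \<open>g \<cdot> e \<cdot> p/q\<close> satisfies
  \<open>D \<cdot> r = 0\<close> on the hyperplane \<open>g = 0\<close>; as \<open>D\<close> does not vanish identically there, \<open>g\<close> divides \<open>r\<close>.\<close>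
lemma clears_denominator_cancel_aff:
  assumes p: "p \<in> polyfun" and q: "q \<in> polyfun" "q \<noteq> (\<lambda>x. 0)"
    and e: "e \<in> polyfun" and D: "D \<in> polyfun" and a: "a \<noteq> 0"
    and clears_ge: "clears_denominator p q (\<lambda>x. aff a c x * e x)"
    and clears_D: "clears_denominator p q D"
    and D_nz: "aff a c y = 0" "D y \<noteq> 0"
  shows "clears_denominator p q e"
proof -
  obtain r where r: "r \<in> polyfun" "\<And>x. p x * (aff a c x * e x) = r x * q x"
    using clears_ge unfolding clears_denominator_def by blast
  obtain r' where r': "r' \<in> polyfun" "\<And>x. p x * D x = r' x * q x"
    using clears_D unfolding clears_denominator_def by blast
  have "(\<lambda>x. D x * r x) = (\<lambda>x. r' x * (aff a c x * e x))"
  proof (rule polyfun_mult_right_cancel[OF _ _ q])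
    show "(\<lambda>x. D x * r x) \<in> polyfun" "(\<lambda>x. r' x * (aff a c x * e x)) \<in> polyfun"
      using D r(1) r'(1) e polyfun_aff by (auto intro!: polyfun.pmult)
    show "D x * r x * q x = r' x * (aff a c x * e x) * q x" for x
      using r(2)[of x] r'(2)[of x] by (metis mult.assoc mult.commute)
  qed
  then have "aff a c x = 0 \<Longrightarrow> D x * r x = 0" for x by (metis mult_zero_left mult_zero_right)
  then have "aff a c x = 0 \<Longrightarrow> r x = 0" for x
    using polyfun_no_zero_divisors_on_hyperplane[OF a D r(1)] D_nz by blast
  then obtain s where s: "s \<in> polyfun" "\<And>x. r x = aff a c x * s x"
    using polyfun_vanishing_on_hyperplane_dvd[OF a r(1)] by blast
  have "(\<lambda>x. p x * e x) = (\<lambda>x. s x * q x)"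
  proof (rule polyfun_mult_right_cancel[OF _ _ polyfun_aff])
    show "(\<lambda>x. p x * e x) \<in> polyfun" "(\<lambda>x. s x * q x) \<in> polyfun"
      using p e s(1) q(1) by (auto intro!: polyfun.pmult)
    show "aff a c \<noteq> (\<lambda>x. 0)" using aff_nonzero_somewhere[OF a] by metis
    show "p x * e x * aff a c x = s x * q x * aff a c x" for x
      using r(2)[of x] s(2)[of x] by (simp add: algebra_simps)
  qed
  then show ?thesis unfolding clears_denominator_def using s(1) by (metis (no_types))
qed

context
  fixes p q :: "complex^'n \<Rightarrow> complex"
    and R :: "'s set" and l :: "'s \<Rightarrow> complex^'n \<Rightarrow> complex"
  assumes p: "p \<in> polyfun" and q: "q \<in> polyfun" "q \<noteq> (\<lambda>x. 0)"
    and l_affine: "\<And>s. s \<in> R \<Longrightarrow> affine_fun (l s)"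
    and other_hyperplanes: "\<And>a c. a \<noteq> 0 \<Longrightarrow> (\<And>s. s \<in> R \<Longrightarrow> {x. l s x = 0} \<noteq> {x. aff a c x = 0}) \<Longrightarrow>
           \<exists>D\<in>polyfun. (\<exists>y. aff a c y = 0 \<and> D y \<noteq> 0) \<and> clears_denominator p q D"
begin

lemma clears_denominator_trade_affine_factor:
  assumes g: "affine_fun g" "g \<noteq> (\<lambda>x. 0)" and e: "e \<in> polyfun" and ss: "set ss \<subseteq> R"
    and clears: "clears_denominator p q (\<lambda>x. g x * e x * (\<Prod>s\<leftarrow>ss. l s x))"
  shows "\<exists>ss'. set ss' \<subseteq> R \<and> clears_denominator p q (\<lambda>x. e x * (\<Prod>s\<leftarrow>ss'. l s x))"
proof -
  obtain a c where g_aff: "g = aff a c" using g(1) unfolding affine_fun_iff_aff by blast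
  have l_poly: "(\<lambda>x. \<Prod>s\<leftarrow>ss. l s x) \<in> polyfun"
    using ss by (intro polyfun_prod_list polyfun_affine_fun l_affine) blast
  show ?thesis
  proof (cases "a = 0")
    case True
    then have "c \<noteq> 0" using g(2) by (simp add: g_aff fun_eq_iff)
    moreover have "clears_denominator p q (\<lambda>x. c * (e x * (\<Prod>s\<leftarrow>ss. l s x)))"
      using clears by (simp add: g_aff True mult.assoc)
    ultimately show ?thesis using clears_denominator_scale_iff ss by blast
  next
    case a: False
    show ?thesis
    proof (cases "\<exists>s\<in>R. {x. l s x = 0} = {x. aff a c x = 0}")
      case True
      then obtain s where s: "s \<in> R" "{x. l s x = 0} = {x. aff a c x = 0}" by blast
      obtain a' c' where l_s: "l s = aff a' c'"
        using l_affine[OF s(1)] unfolding affine_fun_iff_aff by blast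
      have "{x. aff a' c' x = 0} = {x. aff a c x = 0}" using s(2) by (simp add: l_s)
      then obtain \<mu> where \<mu>_nz: "\<mu> \<noteq> 0" and \<mu>_aff: "\<And>x. aff a' c' x = \<mu> * aff a c x"
        using aff_same_zeros_proportional[OF a] by blast
      have "clears_denominator p q (\<lambda>x. \<mu> * (g x * e x * (\<Prod>s\<leftarrow>ss. l s x)))"
        using clears by (simp add: clears_denominator_scale_iff[OF \<mu>_nz])
      moreover have "\<mu> * (g x * e x * (\<Prod>s\<leftarrow>ss. l s x)) = e x * (\<Prod>s\<leftarrow>s # ss. l s x)" for x
        by (simp add: l_s \<mu>_aff g_aff algebra_simps)
      ultimately have "clears_denominator p q (\<lambda>x. e x * (\<Prod>s\<leftarrow>s # ss. l s x))" by simp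
      then show ?thesis using s(1) ss by (intro exI[of _ "s # ss"]) simp
    next
      case False
      then obtain D y where "D \<in> polyfun" "aff a c y = 0" "D y \<noteq> 0" "clears_denominator p q D"
        using other_hyperplanes[OF a] by blast
      moreover have "clears_denominator p q (\<lambda>x. aff a c x * (e x * (\<Prod>s\<leftarrow>ss. l s x)))"
        using clears by (simp add: g_aff mult.assoc)
      ultimately have "clears_denominator p q (\<lambda>x. e x * (\<Prod>s\<leftarrow>ss. l s x))"
        using clears_denominator_cancel_aff[OF p q polyfun.pmult[OF e l_poly]] a by blast
      then show ?thesis using ss by blast
    qed
  qed
qed

lemma clears_denominator_by_allowed_factors:
  assumes I: "finite I" and h: "\<And>i. i \<in> I \<Longrightarrow> affine_fun (h i) \<and> h i \<noteq> (\<lambda>x. 0)"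
    and clears: "clears_denominator p q (\<lambda>x. \<Prod>i\<in>I. h i x)"
  shows "\<exists>ss. set ss \<subseteq> R \<and> clears_denominator p q (\<lambda>x. \<Prod>s\<leftarrow>ss. l s x)"
proof -
  have "set ss \<subseteq> R \<Longrightarrow> clears_denominator p q (\<lambda>x. (\<Prod>i\<in>I. h i x) * (\<Prod>s\<leftarrow>ss. l s x))
      \<Longrightarrow> \<exists>ss. set ss \<subseteq> R \<and> clears_denominator p q (\<lambda>x. \<Prod>s\<leftarrow>ss. l s x)" for ss
    using I h
  proof (induction I arbitrary: ss rule: finite_induct)
    case empty
    then show ?case by auto
  next
    case (insert i I)
    have "(\<lambda>x. \<Prod>i\<in>I. h i x) \<in> polyfun"
      using insert.prems(3) by (intro polyfun_prod polyfun_affine_fun) blast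
    moreover have "clears_denominator p q (\<lambda>x. h i x * (\<Prod>i\<in>I. h i x) * (\<Prod>s\<leftarrow>ss. l s x))"
      using insert.prems(2) insert.hyps by (simp add: mult.assoc)
    moreover have "affine_fun (h i)" "h i \<noteq> (\<lambda>x. 0)" using insert.prems(3) by blast+
    ultimately obtain ss' where "set ss' \<subseteq> R"
      "clears_denominator p q (\<lambda>x. (\<Prod>i\<in>I. h i x) * (\<Prod>s\<leftarrow>ss'. l s x))"
      using clears_denominator_trade_affine_factor insert.prems(1) by meson
    then show ?case using insert.IH insert.prems(3) by blast
  qed
  from this[of "[]"] show ?thesis using clears by simp
qed

end

section \<open>The extended affine Weyl group\<close>

definition affine_map :: "(complex^'n \<Rightarrow> complex^'n) \<Rightarrow> bool" where
  "affine_map \<phi> \<longleftrightarrow> (\<exists>M c. \<phi> = (\<lambda>v. M *v v + c))"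

lemma lf_matrix_vector_mult: "lf L (M *v x) = lf (transpose M *v L) x"
proof -
  have "lf L (M *v x) = (\<Sum>i\<in>UNIV. \<Sum>j\<in>UNIV. L$i * (M$i$j * x$j))"
    unfolding lf_def matrix_vector_mult_def by (simp add: sum_distrib_left)
  also have "\<dots> = (\<Sum>j\<in>UNIV. \<Sum>i\<in>UNIV. L$i * (M$i$j * x$j))" by (rule sum.swap)
  also have "\<dots> = lf (transpose M *v L) x"
    unfolding lf_def matrix_vector_mult_def transpose_def
    by (simp add: sum_distrib_left mult.commute mult.left_commute)
  finally show ?thesis .
qed

lemma lf_affine_map: "affine_map \<phi> \<Longrightarrow> \<exists>a c. (\<lambda>x. lf L (\<phi> x)) = aff a c"
  unfolding affine_map_def aff_def by (auto simp: lf_add lf_matrix_vector_mult) blast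

lemma polyfun_lf_affine_map: "affine_map \<phi> \<Longrightarrow> (\<lambda>x. lf L (\<phi> x)) \<in> polyfun"
  using lf_affine_map polyfun_aff by metis

text \<open>Each coordinate of \<open>\<phi> x - x\<close> is an affine function vanishing on the hyperplane, hence a
  multiple of its equation; a fixed point off the hyperplane forces the multiple to be zero.\<close>
lemma affine_map_fixed_set_eq_hyperplane:
  assumes \<phi>: "affine_map \<phi>" and a: "a \<noteq> 0" and fixes_H: "\<And>x. aff a c x = 0 \<Longrightarrow> \<phi> x = x"
    and not_id: "\<exists>x. \<phi> x \<noteq> x"
  shows "{x. \<phi> x = x} = {x. aff a c x = 0}"
proof (rule ccontr)
  assume "{x. \<phi> x = x} \<noteq> {x. aff a c x = 0}"
  then obtain y where y: "\<phi> y = y" "aff a c y \<noteq> 0" using fixes_H by blast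
  obtain M d where \<phi>_eq: "\<phi> = (\<lambda>v. M *v v + d)" using \<phi> unfolding affine_map_def by blast
  have "affine_map (\<lambda>x. \<phi> x - x)" unfolding affine_map_def \<phi>_eq
    by (intro exI[of _ "M - mat 1"] exI[of _ d])
      (simp add: matrix_vector_mult_diff_rdistrib fun_eq_iff)
  have "\<phi> x $ i = x $ i" for x i
  proof -
    obtain e f where ef: "(\<lambda>x. lf (axis i 1) (\<phi> x - x)) = aff e f"
      using lf_affine_map[OF \<open>affine_map (\<lambda>x. \<phi> x - x)\<close>] by blast
    have ef_eq: "aff e f x = \<phi> x $ i - x $ i" for x
      using fun_cong[OF ef, of x] by (simp add: lf_axis_left)
    have "aff a c x = 0 \<Longrightarrow> aff e f x = 0" for x using fixes_H by (simp add: ef_eq)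
    then obtain \<mu> where \<mu>: "\<forall>x. aff e f x = \<mu> * aff a c x"
      using aff_proportional[OF a] by blast
    have "\<mu> = 0" using \<mu> y ef_eq[of y] by simp
    then show ?thesis using \<mu> ef_eq[of x] by simp
  qed
  then show False using not_id by (simp add: vec_eq_iff)
qed

lemma crefl_eq: "crefl a av v = v - lf (cvec av) v *s cvec a"
  unfolding crefl_def lf_def cvec_def by (simp add: mult.commute)

lemma crefl_matrix: "crefl a av = (\<lambda>v. (mat 1 - (\<chi> i j. cvec a $ i * cvec av $ j)) *v v)"
proof
  fix v
  have "(\<chi> i j. cvec a $ i * cvec av $ j) *v v = lf (cvec av) v *s cvec a"
    unfolding lf_def matrix_vector_mult_def
    by (simp add: vec_eq_iff sum_distrib_left mult.commute mult.left_commute)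
  then show "crefl a av v = (mat 1 - (\<chi> i j. cvec a $ i * cvec av $ j)) *v v"
    by (simp add: crefl_eq matrix_vector_mult_diff_rdistrib)
qed

lemma lf_cvec: "lf (cvec av) (cvec a) = of_int (ipair a av)"
  unfolding lf_def cvec_def ipair_def by (simp add: mult.commute)

lemma crefl_involution: "ipair a av = 2 \<Longrightarrow> crefl a av (crefl a av v) = v"
  unfolding crefl_eq
  by (simp add: lf_diff lf_scale lf_cvec algebra_simps vector_sadd_rdistrib [symmetric])

lemma crefl_cvec: "crefl a av (cvec x) = cvec (srefl a av x)"
  unfolding crefl_eq srefl_def lf_cvec by (simp add: cvec_def vec_eq_iff)

lemma cvec_add: "cvec (x + y) = cvec x + cvec y"
  by (simp add: cvec_def vec_eq_iff)

lemma cvec_uminus: "cvec (- x) = - cvec x"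
  by (simp add: cvec_def vec_eq_iff)

lemma weyl_group_linear: "w \<in> weyl_group Phi cor \<Longrightarrow> \<exists>M. w = (\<lambda>v. M *v v)"
proof (induction rule: weyl_group.induct)
  case wid
  show ?case by (intro exI[of _ "mat 1"]) (simp add: fun_eq_iff)
next
  case (wrefl a w)
  then obtain M where "w = (\<lambda>v. M *v v)" by blast
  then show ?case
    by (intro exI[of _ "(mat 1 - (\<chi> i j. cvec a $ i * cvec (cor a) $ j)) ** M"])
      (simp add: crefl_matrix matrix_vector_mul_assoc fun_eq_iff)
qed

lemma weyl_group_lattice: "w \<in> weyl_group Phi cor \<Longrightarrow> \<exists>\<mu>. w (cvec \<nu>) = cvec \<mu>"
proof (induction rule: weyl_group.induct)
  case (wrefl a w)
  then obtain \<mu> where "w (cvec \<nu>) = cvec \<mu>" by blast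
  then show ?case by (auto simp: crefl_cvec)
qed auto

lemma weyl_group_comp:
  "w1 \<in> weyl_group Phi cor \<Longrightarrow> w2 \<in> weyl_group Phi cor \<Longrightarrow> w1 \<circ> w2 \<in> weyl_group Phi cor"
  by (induction w1 rule: weyl_group.induct) (auto simp: comp_assoc intro: weyl_group.wrefl)

lemma weyl_group_inverse:
  assumes "root_datum Phi cor"
  shows "w \<in> weyl_group Phi cor \<Longrightarrow> \<exists>w'\<in>weyl_group Phi cor. w' \<circ> w = id \<and> w \<circ> w' = id"
proof (induction rule: weyl_group.induct)
  case wid
  show ?case by (intro bexI[OF _ weyl_group.wid]) simp
next
  case (wrefl a w)
  then obtain w' where w': "w' \<in> weyl_group Phi cor" "w' \<circ> w = id" "w \<circ> w' = id" by blast
  let ?r = "crefl a (cor a)"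
  have "ipair a (cor a) = 2" using assms wrefl.hyps unfolding root_datum_def by blast
  then have rr: "?r \<circ> ?r = id" by (simp add: fun_eq_iff crefl_involution)
  have "?r \<in> weyl_group Phi cor" using weyl_group.wrefl[OF wrefl.hyps(1) weyl_group.wid] by simp
  then have "w' \<circ> ?r \<in> weyl_group Phi cor" using w'(1) by (rule weyl_group_comp[rotated])
  moreover have "(w' \<circ> ?r) \<circ> (?r \<circ> w) = id" "(?r \<circ> w) \<circ> (w' \<circ> ?r) = id"
    using rr w'(2,3) by (simp_all add: comp_assoc) (metis comp_assoc comp_id)+
  ultimately show ?case by blast
qed

lemma ext_weyl_group_affine_map: "g \<in> ext_weyl_group Phi cor \<Longrightarrow> affine_map g"
  unfolding ext_weyl_group_def affine_map_def using weyl_group_linear by fastforce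

lemma ext_weyl_group_comp:
  assumes "g \<in> ext_weyl_group Phi cor" "h \<in> ext_weyl_group Phi cor"
  shows "g \<circ> h \<in> ext_weyl_group Phi cor"
proof -
  obtain w1 \<nu>1 w2 \<nu>2 where w: "w1 \<in> weyl_group Phi cor" "w2 \<in> weyl_group Phi cor"
    and gh: "g = (\<lambda>v. w1 v + cvec \<nu>1)" "h = (\<lambda>v. w2 v + cvec \<nu>2)"
    using assms unfolding ext_weyl_group_def by blast
  obtain M where M: "w1 = (\<lambda>v. M *v v)" using weyl_group_linear[OF w(1)] by blast
  obtain \<mu> where \<mu>: "w1 (cvec \<nu>2) = cvec \<mu>" using weyl_group_lattice[OF w(1)] by blast
  have "g \<circ> h = (\<lambda>v. (w1 \<circ> w2) v + cvec (\<mu> + \<nu>1))"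
    using \<mu> by (simp add: gh M fun_eq_iff matrix_vector_right_distrib cvec_add)
  then show ?thesis unfolding ext_weyl_group_def using weyl_group_comp[OF w] by blast
qed

lemma ext_weyl_group_inverse:
  assumes rd: "root_datum Phi cor" and g: "g \<in> ext_weyl_group Phi cor"
  shows "bij g" and "inv g \<in> ext_weyl_group Phi cor"
proof -
  obtain w \<nu> where w: "w \<in> weyl_group Phi cor" and g_eq: "g = (\<lambda>v. w v + cvec \<nu>)"
    using g unfolding ext_weyl_group_def by blast
  obtain w' where w': "w' \<in> weyl_group Phi cor" "w' \<circ> w = id" "w \<circ> w' = id"
    using weyl_group_inverse[OF rd w] by blast
  obtain M where M: "w = (\<lambda>v. M *v v)" using weyl_group_linear[OF w] by blast
  obtain M' where M': "w' = (\<lambda>v. M' *v v)" using weyl_group_linear[OF w'(1)] by blast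
  obtain \<mu> where \<mu>: "w' (cvec \<nu>) = cvec \<mu>" using weyl_group_lattice[OF w'(1)] by blast
  then have \<mu>': "w (cvec \<mu>) = cvec \<nu>" using w'(3) by (metis comp_apply id_apply)
  define h where "h = (\<lambda>v. w' v + cvec (- \<mu>))"
  have "h \<circ> g = id" "g \<circ> h = id"
    using w'(2,3) \<mu> \<mu>' unfolding h_def g_eq M M'
    by (auto simp: fun_eq_iff matrix_vector_right_distrib matrix_vector_mult_diff_distrib cvec_uminus)
  then have "bij g" "inv g = h" by (auto intro: o_bij inv_unique_comp)
  moreover have "h \<in> ext_weyl_group Phi cor" unfolding ext_weyl_group_def h_def using w'(1) by blast
  ultimately show "bij g" "inv g \<in> ext_weyl_group Phi cor" by simp_all
qed

lemma affine_map_inv: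
  "root_datum Phi cor \<Longrightarrow> g \<in> ext_weyl_group Phi cor \<Longrightarrow> affine_map (inv g)"
  using ext_weyl_group_inverse(2) ext_weyl_group_affine_map by blast

lemma ext_weyl_group_inv_differ:
  assumes rd: "root_datum Phi cor"
    and g0: "g0 \<in> ext_weyl_group Phi cor" and g: "g \<in> ext_weyl_group Phi cor" and "g0 \<noteq> g"
  shows "\<exists>x. inv g0 x \<noteq> inv g x"
proof (rule ccontr)
  assume "\<not> ?thesis"
  then have "inv g0 = inv g" by (simp add: fun_eq_iff)
  then have "inv (inv g0) = inv (inv g)" by simp
  then show False
    using \<open>g0 \<noteq> g\<close> inv_inv_eq[OF ext_weyl_group_inverse(1)[OF rd g0]]
      inv_inv_eq[OF ext_weyl_group_inverse(1)[OF rd g]] by simp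
qed

text \<open>If \<open>g0\<inverse>\<close> and \<open>g\<inverse>\<close> agree on a hyperplane then \<open>g0 \<circ> g\<inverse>\<close> is an element of the extended affine
  Weyl group fixing that hyperplane pointwise, i.e. a reflection in it.\<close>
lemma ext_weyl_group_inv_differ_on_hyperplane:
  assumes rd: "root_datum Phi cor"
    and g0: "g0 \<in> ext_weyl_group Phi cor" and g: "g \<in> ext_weyl_group Phi cor" and "g0 \<noteq> g"
    and a: "a \<noteq> 0"
    and not_reflection: "\<And>s. s \<in> affine_reflections Phi cor \<Longrightarrow> {x. s x = x} \<noteq> {x. aff a c x = 0}"
  shows "\<exists>x. aff a c x = 0 \<and> inv g0 x \<noteq> inv g x"
proof (rule ccontr)
  assume "\<not> ?thesis"
  then have agree: "aff a c x = 0 \<Longrightarrow> inv g0 x = inv g x" for x by blast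
  let ?s = "g0 \<circ> inv g"
  have s: "?s \<in> ext_weyl_group Phi cor"
    using ext_weyl_group_comp[OF g0 ext_weyl_group_inverse(2)[OF rd g]] .
  have bij: "bij g0" "bij g" using ext_weyl_group_inverse(1)[OF rd] g0 g by blast+
  have "?s x = x" if "aff a c x = 0" for x
  proof -
    have "?s x = g0 (inv g0 x)" using agree[OF that] by simp
    also have "\<dots> = x" using bij(1) by (simp add: bij_is_surj surj_f_inv_f)
    finally show ?thesis .
  qed
  moreover have "\<exists>x. ?s x \<noteq> x"
  proof (rule ccontr)
    assume "\<not> ?thesis"
    then have "g0 \<circ> inv g = id" by (simp add: fun_eq_iff)
    moreover have "g0 = (g0 \<circ> inv g) \<circ> g"
      using bij(2) by (simp add: comp_assoc bij_is_inj inv_o_cancel)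
    ultimately have "g0 = g" by simp
    with \<open>g0 \<noteq> g\<close> show False by simp
  qed
  ultimately have "{x. ?s x = x} = {x. aff a c x = 0}"
    using affine_map_fixed_set_eq_hyperplane[OF ext_weyl_group_affine_map[OF s] a] by blast
  moreover from this have "?s \<in> affine_reflections Phi cor"
    using s is_affine_hyperplane_aff[OF a] unfolding affine_reflections_def by simp
  ultimately show False using not_reflection by blast
qed

section \<open>Difference operators preserving polynomials\<close>

definition inv_gap ::
    "complex^'n \<Rightarrow> (complex^'n \<Rightarrow> complex^'n) \<Rightarrow> (complex^'n \<Rightarrow> complex^'n) \<Rightarrow> complex^'n \<Rightarrow> complex" where
  "inv_gap L g0 g x = lf L (inv g0 x) - lf L (inv g x)"

lemma affine_fun_inv_gap:
  assumes rd: "root_datum Phi cor"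
    and "g0 \<in> ext_weyl_group Phi cor" "g \<in> ext_weyl_group Phi cor"
  shows "affine_fun (inv_gap L g0 g)"
proof -
  obtain a c where "(\<lambda>x. lf L (inv g0 x)) = aff a c"
    using lf_affine_map[OF affine_map_inv[OF rd assms(2)]] by blast
  moreover obtain a' c' where "(\<lambda>x. lf L (inv g x)) = aff a' c'"
    using lf_affine_map[OF affine_map_inv[OF rd assms(3)]] by blast
  ultimately have "inv_gap L g0 g = aff (a - a') (c - c')"
    unfolding inv_gap_def by (simp add: fun_eq_iff aff_diff [symmetric])
  then show ?thesis unfolding affine_fun_iff_aff by blast
qed

lemma exists_lf_inv_gap_nonzero:
  assumes "finite S" and differ: "\<And>g. g \<in> S \<Longrightarrow> \<exists>x\<in>H. inv g0 x \<noteq> inv g x"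
  shows "\<exists>L. \<forall>g\<in>S. \<exists>x\<in>H. inv_gap L g0 g x \<noteq> 0"
proof -
  obtain pt where pt: "\<forall>g\<in>S. pt g \<in> H \<and> inv g0 (pt g) \<noteq> inv g (pt g)"
    using bchoice[of S "\<lambda>g x. x \<in> H \<and> inv g0 x \<noteq> inv g x"] differ by blast
  let ?Z = "(\<lambda>g. inv g0 (pt g) - inv g (pt g)) ` S"
  have "finite ?Z" "0 \<notin> ?Z" using assms(1) pt by auto
  then obtain L where "\<forall>z\<in>?Z. lf L z \<noteq> 0" using exists_lf_nonzero_on_finite by blast
  then show ?thesis using pt by (intro exI[of _ L]) (auto simp: inv_gap_def lf_diff [symmetric])
qed

text \<open>Multiplying the argument by \<open>f\<close> and subtracting \<open>f \<circ> \<phi> g'\<close> times the result kills the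
  \<open>g'\<close>-term of the operator \<open>P \<mapsto> \<Sum>g. c g \<cdot> P \<circ> \<phi> g\<close> without leaving the polynomials.\<close>
lemma polynomial_preserving_mult_commutator:
  fixes c :: "'g \<Rightarrow> complex^'m \<Rightarrow> complex" and \<phi> :: "'g \<Rightarrow> complex^'m \<Rightarrow> complex^'n"
  assumes T: "\<forall>P\<in>polyfun. \<exists>Q\<in>polyfun. \<forall>x\<in>G. (\<Sum>g\<in>F. c g x * P (\<phi> g x)) = Q x"
    and f: "f \<in> polyfun" and f_\<phi>: "\<And>g. g \<in> S \<Longrightarrow> (\<lambda>x. f (\<phi> g x)) \<in> polyfun"
    and S: "finite S"
  shows "\<forall>P\<in>polyfun. \<exists>Q\<in>polyfun. \<forall>x\<in>G.
           (\<Sum>g\<in>F. c g x * (\<Prod>g'\<in>S. f (\<phi> g x) - f (\<phi> g' x)) * P (\<phi> g x)) = Q x"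
  using S f_\<phi>
proof (induction S rule: finite_induct)
  case empty
  then show ?case using T by simp
next
  case (insert a S)
  let ?T = "\<lambda>P x. \<Sum>g\<in>F. c g x * (\<Prod>g'\<in>S. f (\<phi> g x) - f (\<phi> g' x)) * P (\<phi> g x)"
  have IH: "\<forall>P\<in>polyfun. \<exists>Q\<in>polyfun. \<forall>x\<in>G. ?T P x = Q x" using insert.IH insert.prems by blast
  show ?case
  proof
    fix P :: "complex^'n \<Rightarrow> complex" assume P: "P \<in> polyfun"
    obtain Q1 where Q1: "Q1 \<in> polyfun" "\<forall>x\<in>G. ?T (\<lambda>y. f y * P y) x = Q1 x"
      using bspec[OF IH polyfun.pmult[OF f P]] by blast
    obtain Q2 where Q2: "Q2 \<in> polyfun" "\<forall>x\<in>G. ?T P x = Q2 x"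
      using bspec[OF IH P] by blast
    have "c g x * (\<Prod>g'\<in>insert a S. f (\<phi> g x) - f (\<phi> g' x)) * P (\<phi> g x)
        = c g x * (\<Prod>g'\<in>S. f (\<phi> g x) - f (\<phi> g' x)) * (f (\<phi> g x) * P (\<phi> g x))
          - f (\<phi> a x) * (c g x * (\<Prod>g'\<in>S. f (\<phi> g x) - f (\<phi> g' x)) * P (\<phi> g x))" for g x
      using insert.hyps by (simp add: algebra_simps)
    then have "(\<Sum>g\<in>F. c g x * (\<Prod>g'\<in>insert a S. f (\<phi> g x) - f (\<phi> g' x)) * P (\<phi> g x))
        = ?T (\<lambda>y. f y * P y) x - f (\<phi> a x) * ?T P x" for x
      by (simp add: sum_subtractf sum_distrib_left)
    moreover have "(\<lambda>x. Q1 x - f (\<phi> a x) * Q2 x) \<in> polyfun"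
      using Q1(1) Q2(1) insert.prems by (intro polyfun_diff polyfun.pmult) auto
    ultimately show "\<exists>Q\<in>polyfun. \<forall>x\<in>G.
        (\<Sum>g\<in>F. c g x * (\<Prod>g'\<in>insert a S. f (\<phi> g x) - f (\<phi> g' x)) * P (\<phi> g x)) = Q x"
      using Q1(2) Q2(2) by (intro bexI[of _ "\<lambda>x. Q1 x - f (\<phi> a x) * Q2 x"]) auto
  qed
qed

locale polynomial_preserving_operator =
  fixes Phi :: "(int^'n) set" and cor :: "int^'n \<Rightarrow> int^'n"
    and F :: "(complex^'n \<Rightarrow> complex^'n) set"
    and p q :: "(complex^'n \<Rightarrow> complex^'n) \<Rightarrow> complex^'n \<Rightarrow> complex"
  assumes root_datum: "root_datum Phi cor"
    and finite_F: "finite F" and F_ext: "F \<subseteq> ext_weyl_group Phi cor"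
    and pq: "\<forall>g\<in>F. p g \<in> polyfun \<and> q g \<in> polyfun \<and> q g \<noteq> (\<lambda>x. 0)"
    and preserves_polyfun: "\<forall>P\<in>polyfun. \<exists>Q\<in>polyfun. \<forall>x. (\<forall>g\<in>F. q g x \<noteq> 0) \<longrightarrow>
           (\<Sum>g\<in>F. p g x / q g x * P (inv g x)) = Q x"
begin

lemma polyfun_lf_inv: "g \<in> F \<Longrightarrow> (\<lambda>x. lf L (inv g x)) \<in> polyfun"
  using F_ext affine_map_inv[OF root_datum] polyfun_lf_affine_map by blast

text \<open>Apply the operator to the constant \<open>1\<close> after killing every term except the one of \<open>g0\<close>.\<close>
lemma clears_denominator_inv_gap_prod:
  assumes g0: "g0 \<in> F"
  shows "clears_denominator (p g0) (q g0) (\<lambda>x. \<Prod>g\<in>F-{g0}. inv_gap L g0 g x)"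
proof -
  let ?G = "{x. \<forall>g\<in>F. q g x \<noteq> 0}"
  let ?D = "\<lambda>x. \<Prod>g\<in>F-{g0}. inv_gap L g0 g x"
  have "\<forall>P\<in>polyfun. \<exists>Q\<in>polyfun. \<forall>x\<in>?G. (\<Sum>g\<in>F. p g x / q g x * P (inv g x)) = Q x"
    using preserves_polyfun by simp
  then have "\<forall>P\<in>polyfun. \<exists>Q\<in>polyfun. \<forall>x\<in>?G. (\<Sum>g\<in>F. p g x / q g x *
      (\<Prod>g'\<in>F-{g0}. lf L (inv g x) - lf L (inv g' x)) * P (inv g x)) = Q x"
    using finite_F polyfun_lf_inv by (intro polynomial_preserving_mult_commutator polyfun_lf) auto
  then obtain Q where Q: "Q \<in> polyfun" "\<forall>x\<in>?G. (\<Sum>g\<in>F. p g x / q g x *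
      (\<Prod>g'\<in>F-{g0}. lf L (inv g x) - lf L (inv g' x)) * 1) = Q x"
    using bspec[OF _ polyfun.pconst[of 1]] by blast
  have "p g0 x * ?D x = Q x * q g0 x" if x: "x \<in> ?G" for x
  proof -
    have "(\<Prod>g'\<in>F-{g0}. lf L (inv g x) - lf L (inv g' x)) = 0" if "g \<in> F-{g0}" for g
      using that finite_F by (auto simp: prod_zero_iff)
    then have "(\<Sum>g\<in>F-{g0}. p g x / q g x * (\<Prod>g'\<in>F-{g0}. lf L (inv g x) - lf L (inv g' x)) * 1) = 0"
      by simp
    then have "p g0 x / q g0 x * ?D x = Q x"
      using bspec[OF Q(2) x] by (simp add: sum.remove[OF finite_F g0] inv_gap_def)
    then show ?thesis using x g0 by (simp add: field_simps)
  qed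
  moreover have "(\<lambda>x. \<Prod>g\<in>F. q g x) \<in> polyfun" using pq by (intro polyfun_prod) blast
  moreover have "(\<lambda>x. \<Prod>g\<in>F. q g x) \<noteq> (\<lambda>x. 0)" using pq by (intro polyfun_prod_nonzero finite_F) blast
  moreover have "(\<lambda>x. p g0 x * ?D x) \<in> polyfun" "(\<lambda>x. Q x * q g0 x) \<in> polyfun"
    using pq g0 Q(1) finite_F polyfun_lf_inv
    by (auto intro!: polyfun.pmult polyfun_prod polyfun_diff simp: inv_gap_def)
  ultimately have "(\<lambda>x. p g0 x * ?D x) = (\<lambda>x. Q x * q g0 x)"
    using finite_F by (intro polyfun_eq_if_eq_off_zeros[of _ _ "\<lambda>x. \<Prod>g\<in>F. q g x"]) auto
  then show ?thesis unfolding clears_denominator_def using Q(1) by (metis (no_types))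
qed

lemma exists_inv_gap_nonzero:
  assumes "g0 \<in> F"
  shows "\<exists>L. \<forall>g\<in>F-{g0}. inv_gap L g0 g \<noteq> (\<lambda>x. 0)"
proof -
  have "\<exists>x\<in>UNIV. inv g0 x \<noteq> inv g x" if "g \<in> F-{g0}" for g
    using ext_weyl_group_inv_differ[OF root_datum] assms that F_ext by blast
  then obtain L where "\<forall>g\<in>F-{g0}. \<exists>x\<in>UNIV. inv_gap L g0 g x \<noteq> 0"
    using exists_lf_inv_gap_nonzero[of "F-{g0}"] finite_F by blast
  then show ?thesis by (auto simp: fun_eq_iff)
qed

lemma clears_denominator_off_reflection_hyperplanes:
  assumes g0: "g0 \<in> F" and a: "a \<noteq> 0"
    and not_reflection: "\<And>s. s \<in> affine_reflections Phi cor \<Longrightarrow> {x. s x = x} \<noteq> {x. aff a c x = 0}"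
  shows "\<exists>D\<in>polyfun. (\<exists>y. aff a c y = 0 \<and> D y \<noteq> 0) \<and> clears_denominator (p g0) (q g0) D"
proof -
  have g0_ext: "g0 \<in> ext_weyl_group Phi cor" using g0 F_ext by blast
  have "\<exists>x\<in>{x. aff a c x = 0}. inv g0 x \<noteq> inv g x" if g: "g \<in> F-{g0}" for g
  proof -
    have "g \<in> ext_weyl_group Phi cor" "g0 \<noteq> g" using g F_ext by auto
    from ext_weyl_group_inv_differ_on_hyperplane[OF root_datum g0_ext this a not_reflection]
    show ?thesis by simp
  qed
  then obtain L where L: "\<forall>g\<in>F-{g0}. \<exists>x\<in>{x. aff a c x = 0}. inv_gap L g0 g x \<noteq> 0"
    using exists_lf_inv_gap_nonzero[of "F-{g0}"] finite_F by blast
  have poly: "inv_gap L g0 g \<in> polyfun" if "g \<in> F" for g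
    using that F_ext by (intro polyfun_affine_fun affine_fun_inv_gap[OF root_datum g0_ext]) blast
  have "\<exists>y. aff a c y = 0 \<and> (\<Prod>g\<in>F-{g0}. inv_gap L g0 g y) \<noteq> 0"
  proof (rule polyfun_prod_nonvanishing_on_hyperplane[OF a])
    show "finite (F - {g0})" using finite_F by simp
    show "inv_gap L g0 g \<in> polyfun \<and> (\<exists>x. aff a c x = 0 \<and> inv_gap L g0 g x \<noteq> 0)"
      if "g \<in> F - {g0}" for g
      using that L poly[of g] by blast
  qed
  moreover have "(\<lambda>x. \<Prod>g\<in>F-{g0}. inv_gap L g0 g x) \<in> polyfun"
    using poly by (intro polyfun_prod) blast
  ultimately show ?thesis using clears_denominator_inv_gap_prod[OF g0, of L]
    by (intro bexI[of _ "\<lambda>x. \<Prod>g\<in>F-{g0}. inv_gap L g0 g x"]) auto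
qed

lemma clears_denominator_by_reflections:
  fixes l :: "(complex^'n \<Rightarrow> complex^'n) \<Rightarrow> complex^'n \<Rightarrow> complex"
  assumes l: "\<forall>s\<in>affine_reflections Phi cor. affine_fun (l s) \<and> {x. l s x = 0} = {x. s x = x}"
    and g0: "g0 \<in> F"
  shows "\<exists>ss. set ss \<subseteq> affine_reflections Phi cor \<and>
    clears_denominator (p g0) (q g0) (\<lambda>x. \<Prod>s\<leftarrow>ss. l s x)"
proof -
  obtain L where L: "\<forall>g\<in>F-{g0}. inv_gap L g0 g \<noteq> (\<lambda>x. 0)"
    using exists_inv_gap_nonzero[OF g0] by blast
  show ?thesis
  proof (rule clears_denominator_by_allowed_factors)
    show "p g0 \<in> polyfun" "q g0 \<in> polyfun" "q g0 \<noteq> (\<lambda>x. 0)" using pq g0 by auto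
    show "affine_fun (l s)" if "s \<in> affine_reflections Phi cor" for s using l that by blast
    show "\<exists>D\<in>polyfun. (\<exists>y. aff a c y = 0 \<and> D y \<noteq> 0) \<and> clears_denominator (p g0) (q g0) D"
      if a: "a \<noteq> 0"
        and not_l: "\<And>s. s \<in> affine_reflections Phi cor \<Longrightarrow> {x. l s x = 0} \<noteq> {x. aff a c x = 0}"
      for a c
    proof (rule clears_denominator_off_reflection_hyperplanes[OF g0 a])
      fix s assume s: "s \<in> affine_reflections Phi cor"
      then have "{x. l s x = 0} = {x. s x = x}" using l by blast
      with not_l[OF s] show "{x. s x = x} \<noteq> {x. aff a c x = 0}" by simp
    qed
    show "finite (F - {g0})" using finite_F by simp
    show "affine_fun (inv_gap L g0 g) \<and> inv_gap L g0 g \<noteq> (\<lambda>x. 0)" if g: "g \<in> F - {g0}" for g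
    proof
      show "affine_fun (inv_gap L g0 g)"
        using g g0 F_ext by (intro affine_fun_inv_gap[OF root_datum]) auto
      show "inv_gap L g0 g \<noteq> (\<lambda>x. 0)" using L g by blast
    qed
    show "clears_denominator (p g0) (q g0) (\<lambda>x. \<Prod>g\<in>F-{g0}. inv_gap L g0 g x)"
      using clears_denominator_inv_gap_prod[OF g0] .
  qed
qed

end

theorem mainTheorem7:
  fixes Phi :: "(int^'n) set" and cor :: "int^'n \<Rightarrow> int^'n"
    and l :: "(complex^'n \<Rightarrow> complex^'n) \<Rightarrow> complex^'n \<Rightarrow> complex"
    and F :: "(complex^'n \<Rightarrow> complex^'n) set"
    and p q :: "(complex^'n \<Rightarrow> complex^'n) \<Rightarrow> complex^'n \<Rightarrow> complex"
  assumes "root_datum Phi cor"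
    and "\<forall>s\<in>affine_reflections Phi cor. affine_fun (l s) \<and> {x. l s x = 0} = {x. s x = x}"
    and "finite F" and "F \<subseteq> ext_weyl_group Phi cor"
    and "\<forall>g\<in>F. p g \<in> polyfun \<and> q g \<in> polyfun \<and> q g \<noteq> (\<lambda>x. 0)"
    and "\<forall>P\<in>polyfun. \<exists>Q\<in>polyfun. \<forall>x. (\<forall>g\<in>F. q g x \<noteq> 0) \<longrightarrow>
           (\<Sum>g\<in>F. p g x / q g x * P (inv g x)) = Q x"
  shows "\<forall>g\<in>F. \<exists>r\<in>polyfun. \<exists>ss. set ss \<subseteq> affine_reflections Phi cor \<and>
           (\<forall>x. p g x * (\<Prod>s\<leftarrow>ss. l s x) = r x * q g x)"
proof
  interpret polynomial_preserving_operator Phi cor F p q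
    using assms(1,3-6) by unfold_locales
  fix g assume "g \<in> F"
  from clears_denominator_by_reflections[OF assms(2) this]
  show "\<exists>r\<in>polyfun. \<exists>ss. set ss \<subseteq> affine_reflections Phi cor \<and>
      (\<forall>x. p g x * (\<Prod>s\<leftarrow>ss. l s x) = r x * q g x)"
    unfolding clears_denominator_def by blast
qed

end
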